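(* Assume the standing setup below with $0<T_2<T_1<1$. Then for every $q\in[0,1]$ with $\psi(q)\in(0,1)$, the function $\psi$ is differentiable at $q$ and $\frac{d\psi}{dq}(q)>0$; that is, $\psi$ is strictly increasing in $q$ wherever $\psi\in(0,1)$.
   Context: Standing setup. $P$ is a probability distribution on $\{0,1,\dots,k_{\max}\}$ (a degree distribution with finite maximum degree $k_{\max}$) with mean $\langle k\rangle=\sum_k kP(k)>0$. The excess degree distribution is $Q(k)=(k+1)P(k+1)/\langle k\rangle$ for $k\ge 0$. Fix $T_1,T_2\in(0,1)$. For $q\in[0,1]$ and integers $k_1,k_2\ge 0$ set $$P_q(k_1,k_2)=\binom{k_1+k_2}{k_2}q^{k_2}(1-q)^{k_1}P(k_1+k_2),\qquad Q_q(k_1,k_2)=\binom{k_1+k_2}{k_2}q^{k_2}(1-q)^{k_1}Q(k_1+k_2)$$ (with $0^0=1$). For $u\in[0,1]$ define $$F_q(u)=\sum_{k_1,k_2\ge0}\big(1+(u-1)T_1\big)^{k_1}\big(1+(u-1)T_2\big)^{k_2}Q_q(k_1,k_2),\qquad G_q(u)=\sum_{k_1,k_2\ge0}\big(1+(u-1)T_1\big)^{k_1}\big(1+(u-1)T_2\big)^{k_2}P_q(k_1,k_2).$$ Let $u^*(q)$ be the smallest solution in $[0,1]$ of the fixed point equation $u=F_q(u)$ (note $u=1$ is always a solution), and set $\psi(q)=G_q(u^*(q))$ (the probability that a random node is not in the rumor outbreak; $1-\psi$ is the outbreak size). *)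

theory Defs
  imports "HOL-Analysis.Analysis"
begin

definition is_degree_dist :: "(nat \<Rightarrow> real) \<Rightarrow> nat \<Rightarrow> bool" where
  "is_degree_dist P kmax \<longleftrightarrow> (\<forall>k. 0 \<le> P k) \<and> (\<forall>k>kmax. P k = 0) \<and> (\<Sum>k\<le>kmax. P k) = 1"

definition mean_deg :: "(nat \<Rightarrow> real) \<Rightarrow> nat \<Rightarrow> real" where
  "mean_deg P kmax = (\<Sum>k\<le>kmax. real k * P k)"

definition excess_dist :: "(nat \<Rightarrow> real) \<Rightarrow> nat \<Rightarrow> nat \<Rightarrow> real" where
  "excess_dist P kmax k = real (k + 1) * P (k + 1) / mean_deg P kmax"

definition split_dist :: "(nat \<Rightarrow> real) \<Rightarrow> real \<Rightarrow> nat \<Rightarrow> nat \<Rightarrow> real" where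
  "split_dist R q k1 k2 = real ((k1 + k2) choose k2) * q ^ k2 * (1 - q) ^ k1 * R (k1 + k2)"

text \<open>Generating function; the double sum over all k1, k2 \<ge> 0 reduces to k1, k2 \<le> kmax,
  since R (k1 + k2) = 0 whenever k1 + k2 > kmax for R = P and R = Q.\<close>
definition gen_fun :: "(nat \<Rightarrow> real) \<Rightarrow> nat \<Rightarrow> real \<Rightarrow> real \<Rightarrow> real \<Rightarrow> real \<Rightarrow> real" where
  "gen_fun R kmax T1 T2 q u =
     (\<Sum>k1\<le>kmax. \<Sum>k2\<le>kmax. (1 + (u - 1) * T1) ^ k1 * (1 + (u - 1) * T2) ^ k2 * split_dist R q k1 k2)"

definition F_fun :: "(nat \<Rightarrow> real) \<Rightarrow> nat \<Rightarrow> real \<Rightarrow> real \<Rightarrow> real \<Rightarrow> real \<Rightarrow> real" where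
  "F_fun P kmax T1 T2 q u = gen_fun (excess_dist P kmax) kmax T1 T2 q u"

definition G_fun :: "(nat \<Rightarrow> real) \<Rightarrow> nat \<Rightarrow> real \<Rightarrow> real \<Rightarrow> real \<Rightarrow> real \<Rightarrow> real" where
  "G_fun P kmax T1 T2 q u = gen_fun P kmax T1 T2 q u"

definition u_star :: "(nat \<Rightarrow> real) \<Rightarrow> nat \<Rightarrow> real \<Rightarrow> real \<Rightarrow> real \<Rightarrow> real" where
  "u_star P kmax T1 T2 q = (LEAST u. u \<in> {0..1} \<and> u = F_fun P kmax T1 T2 q u)"

definition psi :: "(nat \<Rightarrow> real) \<Rightarrow> nat \<Rightarrow> real \<Rightarrow> real \<Rightarrow> real \<Rightarrow> real" where
  "psi P kmax T1 T2 q = G_fun P kmax T1 T2 q (u_star P kmax T1 T2 q)"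

end

theory Submission imports Defs begin

(* Summing out the binomial splitting of degrees, both generating
   functions depend on q only through the effective transmissibility
   T(q) = (1 - q) T1 + q T2:  G_q(u) = g_P(1 + (u - 1) T(q)) and
   F_q(u) = g_Q(1 + (u - 1) T(q)), where g_R is the probability generating
   function of R.  Hence psi(q) = Psi(T(q)) with U(T) the least fixed point of
   u = g_Q(1 + (u - 1) T) and Psi(T) = g_P(1 + (U(T) - 1) T).
   When U(T0) < 1, strict convexity of g_Q makes the least fixed point a
   transversal crossing, T0 g_Q'(y0) < 1 with y0 = 1 + (U(T0) - 1) T0.  Hence U
   is continuous at T0 (least zeros of uniformly perturbed functions move
   continuously) and, by an implicit-function argument with divided
   differences, differentiable with U'(T0) <= 0.  The chain rule then gives
   psi'(q) = g_P'(y0) (T0 U'(T0) + U(T0) - 1) (T2 - T1) > 0.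
   The file develops generating-function algebra, two general facts of real
   analysis (least zeros, implicit derivatives), the percolation fixed point,
   the reduction of gen_fun to one variable, and finally the theorem. *)

definition pgf :: "(nat \<Rightarrow> real) \<Rightarrow> nat \<Rightarrow> real \<Rightarrow> real" where
  "pgf R K y = (\<Sum>k\<le>K. R k * y ^ k)"

definition pgf_deriv :: "(nat \<Rightarrow> real) \<Rightarrow> nat \<Rightarrow> real \<Rightarrow> real" where
  "pgf_deriv R K y = (\<Sum>k\<le>K. R k * (real k * y ^ (k - 1)))"

definition divided_diff :: "(nat \<Rightarrow> real) \<Rightarrow> nat \<Rightarrow> real \<Rightarrow> real \<Rightarrow> real" where
  "divided_diff R K y z = (\<Sum>k\<le>K. R k * (\<Sum>i<k. z ^ (k - Suc i) * y ^ i))"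

lemma continuous_on_pgf [continuous_intros]:
  "continuous_on S f \<Longrightarrow> continuous_on S (\<lambda>x. pgf R K (f x))"
  unfolding pgf_def by (intro continuous_intros)

lemma continuous_divided_diff [continuous_intros]:
  "continuous F f \<Longrightarrow> continuous F g \<Longrightarrow> continuous F (\<lambda>x. divided_diff R K (f x) (g x))"
  unfolding divided_diff_def by (intro continuous_intros)

lemma pgf_has_deriv: "(pgf R K has_real_derivative pgf_deriv R K y) (at y)"
  unfolding pgf_def pgf_deriv_def by (auto intro!: derivative_eq_intros sum.cong)

lemma pgf_diff: "pgf R K y - pgf R K z = (y - z) * divided_diff R K y z"
  unfolding pgf_def divided_diff_def
  by (simp add: sum_subtractf[symmetric] sum_distrib_left right_diff_distrib[symmetric]
      power_diff_sumr2 algebra_simps)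

lemma divided_diff_diag: "divided_diff R K y y = pgf_deriv R K y"
  unfolding divided_diff_def pgf_deriv_def
proof (rule sum.cong[OF refl])
  fix k
  have "(\<Sum>i<k. y ^ (k - Suc i) * y ^ i) = (\<Sum>i<k. y ^ (k - 1))"
    by (rule sum.cong[OF refl]) (simp flip: power_add)
  then show "R k * (\<Sum>i<k. y ^ (k - Suc i) * y ^ i) = R k * (real k * y ^ (k - 1))"
    by simp
qed

(* For nonnegative coefficients and arguments in [0,1] the divided difference
   lies between 0 and g_R'(1); this gives a uniform Lipschitz bound. *)
lemma divided_diff_bounds:
  assumes "\<And>k. 0 \<le> R k" and "y \<in> {0..1}" and "z \<in> {0..1}"
  shows "0 \<le> divided_diff R K y z" and "divided_diff R K y z \<le> pgf_deriv R K 1"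
proof -
  have inner: "0 \<le> (\<Sum>i<k. z ^ (k - Suc i) * y ^ i) \<and> (\<Sum>i<k. z ^ (k - Suc i) * y ^ i) \<le> real k"
    for k
  proof -
    have "(\<Sum>i<k. z ^ (k - Suc i) * y ^ i) \<le> (\<Sum>i<k. 1)"
      by (rule sum_mono) (use assms in \<open>auto intro!: mult_le_one power_le_one\<close>)
    moreover have "0 \<le> (\<Sum>i<k. z ^ (k - Suc i) * y ^ i)"
      by (rule sum_nonneg) (use assms in auto)
    ultimately show ?thesis by simp
  qed
  show "0 \<le> divided_diff R K y z" unfolding divided_diff_def
    by (rule sum_nonneg) (use assms inner in auto)
  show "divided_diff R K y z \<le> pgf_deriv R K 1" unfolding divided_diff_def pgf_deriv_def
    by (rule sum_mono) (use assms inner in \<open>auto intro: mult_left_mono\<close>)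
qed

(* Convexity of y^k on [0,1): the tangent slope at y times (1 - y) is below
   the secant to 1, strictly for k >= 2. *)
lemma power_tangent_below_secant:
  fixes y :: real
  assumes "0 \<le> y" and "y < 1"
  shows "real k * (1 - y) * y ^ (k - 1) \<le> 1 - y ^ k"
    and "2 \<le> k \<Longrightarrow> real k * (1 - y) * y ^ (k - 1) < 1 - y ^ k"
proof -
  have secant: "1 - y ^ k = (1 - y) * (\<Sum>i<k. y ^ i)"
    by (rule one_diff_power_eq)
  have tangent: "real k * (1 - y) * y ^ (k - 1) = (1 - y) * (\<Sum>i<k. y ^ (k - 1))"
    by simp
  have le: "y ^ (k - 1) \<le> y ^ i" if "i < k" for i
    using that assms by (intro power_decreasing) auto
  show "real k * (1 - y) * y ^ (k - 1) \<le> 1 - y ^ k"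
    unfolding secant tangent using assms le by (intro mult_left_mono sum_mono) auto
  assume "2 \<le> k"
  have "(\<Sum>i<k. y ^ (k - 1)) < (\<Sum>i<k. y ^ i)"
  proof (rule sum_strict_mono_ex1)
    show "\<exists>i\<in>{..<k}. y ^ (k - 1) < y ^ i"
      using \<open>2 \<le> k\<close> assms by (intro bexI[of _ 0]) (auto simp: power_less_one_iff)
  qed (use le in auto)
  then show "real k * (1 - y) * y ^ (k - 1) < 1 - y ^ k"
    unfolding secant tangent using assms by (intro mult_strict_left_mono) auto
qed

lemma pgf_tangent_below_secant:
  assumes R_nonneg: "\<And>k. 0 \<le> R k" and y: "0 \<le> y" "y < 1"
    and j: "j \<le> K" "2 \<le> j" "0 < R j"
  shows "(1 - y) * pgf_deriv R K y < pgf R K 1 - pgf R K y"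
proof -
  have "(1 - y) * pgf_deriv R K y = (\<Sum>k\<le>K. R k * (real k * (1 - y) * y ^ (k - 1)))"
    by (simp add: pgf_deriv_def sum_distrib_left algebra_simps)
  also have "\<dots> < (\<Sum>k\<le>K. R k * (1 - y ^ k))"
  proof (rule sum_strict_mono_ex1)
    show "\<forall>k\<in>{..K}. R k * (real k * (1 - y) * y ^ (k - 1)) \<le> R k * (1 - y ^ k)"
      using R_nonneg power_tangent_below_secant(1)[OF y] by (auto intro: mult_left_mono)
    show "\<exists>k\<in>{..K}. R k * (real k * (1 - y) * y ^ (k - 1)) < R k * (1 - y ^ k)"
      using j power_tangent_below_secant(2)[OF y j(2)]
      by (intro bexI[of _ j] mult_strict_left_mono) auto
  qed simp
  also have "\<dots> = pgf R K 1 - pgf R K y"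
    by (simp add: pgf_def right_diff_distrib sum_subtractf)
  finally show ?thesis .
qed

(* Smallest fixed point in [0,1]; it exists for continuous f with f 1 = 1,
   since the fixed-point set is closed, nonempty and bounded below. *)
definition least_fixpoint :: "(real \<Rightarrow> real) \<Rightarrow> real" where
  "least_fixpoint f = (LEAST u. u \<in> {0..1} \<and> u = f u)"

lemma least_fixpoint:
  fixes f :: "real \<Rightarrow> real"
  assumes cont: "continuous_on {0..1} f" and f1: "f 1 = 1"
  shows "least_fixpoint f \<in> {0..1}" and "f (least_fixpoint f) = least_fixpoint f"
    and "\<And>y. y \<in> {0..1} \<Longrightarrow> f y = y \<Longrightarrow> least_fixpoint f \<le> y"
proof -
  define S where "S = {u \<in> {0..1}. f u - u = 0}"
  have "closed S"
    unfolding S_def by (intro continuous_closed_preimage_constant continuous_intros cont closed_atLeastAtMost)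
  moreover have "1 \<in> S" and bdd: "bdd_below S"
    using f1 by (auto simp: S_def intro: bdd_belowI[of _ 0])
  ultimately have Inf_S: "Inf S \<in> S"
    by (intro closed_contains_Inf) auto
  have eq: "least_fixpoint f = Inf S"
    unfolding least_fixpoint_def using Inf_S bdd
    by (auto simp: S_def intro!: Least_equality cInf_lower)
  show "least_fixpoint f \<in> {0..1}" and "f (least_fixpoint f) = least_fixpoint f"
    using Inf_S by (auto simp: eq S_def)
  show "\<And>y. y \<in> {0..1} \<Longrightarrow> f y = y \<Longrightarrow> least_fixpoint f \<le> y"
    unfolding eq using bdd by (auto simp: S_def intro!: cInf_lower)
qed

lemma least_zero_continuous:
  fixes \<phi> :: "real \<Rightarrow> real \<Rightarrow> real" and U :: "real \<Rightarrow> real" and T0 :: real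
  assumes U_range: "\<And>T. U T \<in> {0..1}" and U_zero: "\<And>T. \<phi> T (U T) = 0"
    and U_least: "\<And>T y. y \<in> {0..1} \<Longrightarrow> \<phi> T y = 0 \<Longrightarrow> U T \<le> y"
    and cont: "\<And>T. continuous_on {0..1} (\<phi> T)"
    and start: "\<forall>\<^sub>F T in nhds T0. 0 \<le> \<phi> T 0"
    and unif: "\<And>e. 0 < e \<Longrightarrow> \<forall>\<^sub>F T in nhds T0. \<forall>x\<in>{0..1}. \<bar>\<phi> T x - \<phi> T0 x\<bar> < e"
    and crossing: "\<And>e. 0 < e \<Longrightarrow> \<exists>x. U T0 < x \<and> x < U T0 + e \<and> x \<le> 1 \<and> \<phi> T0 x < 0"
  shows "isCont U T0"
proof -
  define u0 where "u0 = U T0"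
  have zero_below: "\<exists>z. 0 \<le> z \<and> z \<le> x \<and> \<phi> T z = 0"
    if "x \<in> {0..1}" "0 \<le> \<phi> T 0" "\<phi> T x \<le> 0" for T x
    using that by (intro IVT2') (auto intro: continuous_on_subset[OF cont])
  have pos_below: "0 < \<phi> T0 x" if x: "0 \<le> x" "x < u0" for x
  proof (rule ccontr)
    assume "\<not> 0 < \<phi> T0 x"
    moreover have "x \<in> {0..1}" using x U_range[of T0] by (auto simp: u0_def)
    ultimately obtain z where "0 \<le> z" "z \<le> x" "\<phi> T0 z = 0"
      using zero_below[of x T0] eventually_nhds_x_imp_x[OF start] by auto
    then show False
      using U_least[of z T0] x U_range[of T0] by (auto simp: u0_def)
  qed
  have "\<forall>\<^sub>F T in nhds T0. \<bar>U T - u0\<bar> < e" if e: "0 < e" for e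
  proof -
    obtain xp where xp: "u0 < xp" "xp < u0 + e" "xp \<le> 1" "\<phi> T0 xp < 0"
      using crossing[OF e] by (auto simp: u0_def)
    obtain m where m: "0 < m" "\<And>x. x \<in> {0..u0 - e} \<Longrightarrow> m \<le> \<phi> T0 x"
    proof (cases "u0 - e < 0")
      case True
      then show ?thesis using that[of 1] by auto
    next
      case False
      moreover have "continuous_on {0..u0 - e} (\<phi> T0)"
        using U_range[of T0] e by (intro continuous_on_subset[OF cont]) (auto simp: u0_def)
      ultimately obtain x where x: "x \<in> {0..u0 - e}" "\<forall>y\<in>{0..u0 - e}. \<phi> T0 x \<le> \<phi> T0 y"
        using continuous_attains_inf[of "{0..u0 - e}" "\<phi> T0"] by auto
      then show ?thesis using that[of "\<phi> T0 x"] pos_below[of x] e by auto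
    qed
    have "\<forall>\<^sub>F T in nhds T0. 0 \<le> \<phi> T 0 \<and> (\<forall>x\<in>{0..1}. \<bar>\<phi> T x - \<phi> T0 x\<bar> < min (- \<phi> T0 xp) m)"
      using start unif[of "min (- \<phi> T0 xp) m"] xp m by (auto intro: eventually_conj)
    then show ?thesis
    proof eventually_elim
      case (elim T)
      have xp01: "xp \<in> {0..1}" using xp U_range[of T0] by (auto simp: u0_def)
      then have "\<phi> T xp < 0" using elim by fastforce
      then obtain z where "z \<le> xp" "\<phi> T z = 0" "z \<in> {0..1}"
        using zero_below[of xp T] elim xp01 by auto
      then have upper: "U T < u0 + e" using U_least[of z T] xp by auto
      have lower: "u0 - e < U T"
      proof (rule ccontr)
        assume "\<not> u0 - e < U T"
        then have "m \<le> \<phi> T0 (U T)" using m(2) U_range[of T] by auto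
        moreover have "\<bar>\<phi> T (U T) - \<phi> T0 (U T)\<bar> < m" using elim U_range[of T] by fastforce
        ultimately show False using U_zero[of T] by simp
      qed
      show ?case using upper lower by (simp add: abs_less_iff)
    qed
  qed
  then have "(U \<longlongrightarrow> u0) (nhds T0)"
    by (simp add: tendsto_iff dist_real_def)
  then show ?thesis
    by (simp add: continuous_at tendsto_at_iff_tendsto_nhds u0_def)
qed

lemma implicit_derivative:
  fixes U A B :: "real \<Rightarrow> real"
  assumes cont_A: "isCont A T0" and cont_B: "isCont B T0" and A_nz: "A T0 \<noteq> 0"
    and implicit_eq: "\<forall>\<^sub>F T in at T0. A T * (U T - U T0) = - B T * (T - T0)"
  shows "(U has_real_derivative - B T0 / A T0) (at T0)"
proof -
  have "\<forall>\<^sub>F T in at T0. A T \<noteq> 0"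
    using cont_A A_nz tendsto_imp_eventually_ne by (auto simp: continuous_at)
  moreover have "\<forall>\<^sub>F T in at T0. T \<noteq> T0"
    by (auto simp: eventually_at_filter)
  ultimately have "\<forall>\<^sub>F T in at T0. - B T / A T = (U T - U T0) / (T - T0)"
    using implicit_eq by eventually_elim (simp add: field_simps)
  moreover have "((\<lambda>T. - B T / A T) \<longlongrightarrow> - B T0 / A T0) (at T0)"
    using cont_A cont_B A_nz by (intro tendsto_intros) (auto simp: continuous_at)
  ultimately show ?thesis
    unfolding has_field_derivative_iff by (rule Lim_transform_eventually[rotated])
qed

lemma pgf_nonneg: "(\<And>k. 0 \<le> R k) \<Longrightarrow> 0 \<le> y \<Longrightarrow> 0 \<le> pgf R K y"
  unfolding pgf_def by (intro sum_nonneg) auto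

lemma pgf_one: "is_degree_dist R K \<Longrightarrow> pgf R K 1 = 1"
  by (simp add: pgf_def is_degree_dist_def)

lemma pgf_deriv_pos:
  assumes "\<And>k. 0 \<le> R k" and "0 < pgf_deriv R K 1" and "0 < y"
  shows "0 < pgf_deriv R K y"
proof -
  obtain k where k: "k \<le> K" "0 < R k * real k"
    using assms(2) sum_nonpos[of "{..K}" "\<lambda>k. R k * (real k * 1 ^ (k - 1))"]
    by (force simp: pgf_deriv_def not_less)
  have "0 < R k * (real k * y ^ (k - 1))"
    using k(2) assms(3) by (simp add: mult.assoc[symmetric])
  then show ?thesis
    unfolding pgf_deriv_def using k(1) assms
    by (intro sum_pos2[of _ k]) (auto intro!: mult_nonneg_nonneg)
qed

lemma unit_interval_shift:
  fixes x t :: real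
  assumes "x \<in> {0..1}" and "t \<in> {0..1}"
  shows "1 + (x - 1) * t \<in> {0..1}"
proof -
  have "0 \<le> (1 - x) * t" and "(1 - x) * t \<le> 1"
    using assms by (auto intro: mult_le_one)
  then show ?thesis by (simp add: algebra_simps)
qed

definition perc_residual :: "(nat \<Rightarrow> real) \<Rightarrow> nat \<Rightarrow> real \<Rightarrow> real \<Rightarrow> real" where
  "perc_residual Q K T x = pgf Q K (1 + (x - 1) * T) - x"

definition residual_slope :: "(nat \<Rightarrow> real) \<Rightarrow> nat \<Rightarrow> real \<Rightarrow> real \<Rightarrow> real \<Rightarrow> real" where
  "residual_slope Q K T u x = T * divided_diff Q K (1 + (x - 1) * T) (1 + (u - 1) * T) - 1"

lemma perc_residual_diff_x:
  "perc_residual Q K T x - perc_residual Q K T u = residual_slope Q K T u x * (x - u)"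
  using pgf_diff[of Q K "1 + (x - 1) * T" "1 + (u - 1) * T"]
  by (simp add: perc_residual_def residual_slope_def algebra_simps)

lemma perc_residual_diff_T:
  "perc_residual Q K T x - perc_residual Q K T0 x
     = (x - 1) * divided_diff Q K (1 + (x - 1) * T) (1 + (x - 1) * T0) * (T - T0)"
  using pgf_diff[of Q K "1 + (x - 1) * T" "1 + (x - 1) * T0"]
  by (simp add: perc_residual_def algebra_simps)

lemma residual_slope_diag:
  "residual_slope Q K T u u = T * pgf_deriv Q K (1 + (u - 1) * T) - 1"
  by (simp add: residual_slope_def divided_diff_diag)

(* Probability U(T) that an edge does not lead to the outbreak, for
   transmissibility T and excess degree distribution Q. *)
definition perc_fixpoint :: "(nat \<Rightarrow> real) \<Rightarrow> nat \<Rightarrow> real \<Rightarrow> real" where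
  "perc_fixpoint Q K T = least_fixpoint (\<lambda>u. pgf Q K (1 + (u - 1) * T))"

context
  fixes Q :: "nat \<Rightarrow> real" and K :: nat
  assumes Q_dist: "is_degree_dist Q K"
begin

lemma Q_nonneg: "0 \<le> Q k"
  using Q_dist by (simp add: is_degree_dist_def)

lemma perc_fixpoint:
  shows "perc_fixpoint Q K T \<in> {0..1}"
    and "perc_residual Q K T (perc_fixpoint Q K T) = 0"
    and "\<And>y. y \<in> {0..1} \<Longrightarrow> perc_residual Q K T y = 0 \<Longrightarrow> perc_fixpoint Q K T \<le> y"
proof -
  have "continuous_on {0..1} (\<lambda>u. pgf Q K (1 + (u - 1) * T))"
    by (intro continuous_intros)
  moreover have "pgf Q K (1 + (1 - 1) * T) = 1"
    using pgf_one[OF Q_dist] by simp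
  ultimately have fp: "least_fixpoint (\<lambda>u. pgf Q K (1 + (u - 1) * T)) \<in> {0..1}"
      "pgf Q K (1 + (least_fixpoint (\<lambda>u. pgf Q K (1 + (u - 1) * T)) - 1) * T)
         = least_fixpoint (\<lambda>u. pgf Q K (1 + (u - 1) * T))"
      "\<And>y. y \<in> {0..1} \<Longrightarrow> pgf Q K (1 + (y - 1) * T) = y
         \<Longrightarrow> least_fixpoint (\<lambda>u. pgf Q K (1 + (u - 1) * T)) \<le> y"
    by (rule least_fixpoint)+
  show "perc_fixpoint Q K T \<in> {0..1}"
    and "perc_residual Q K T (perc_fixpoint Q K T) = 0"
    and "\<And>y. y \<in> {0..1} \<Longrightarrow> perc_residual Q K T y = 0 \<Longrightarrow> perc_fixpoint Q K T \<le> y"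
    using fp by (auto simp: perc_fixpoint_def perc_residual_def)
qed

(* Below 1 the least fixed point is transversal: T0 g_Q'(y0) < 1.  With mass
   on degree >= 2 this is strict convexity (1 - y0) g_Q'(y0) < 1 - g_Q(y0) =
   1 - u0 together with 1 - y0 = (1 - u0) T0; otherwise g_Q' <= 1 and T0 < 1. *)
lemma perc_fixpoint_transversal:
  assumes T0: "0 < T0" "T0 < 1" and u0: "perc_fixpoint Q K T0 < 1"
  shows "T0 * pgf_deriv Q K (1 + (perc_fixpoint Q K T0 - 1) * T0) < 1"
proof -
  define u0 where "u0 = perc_fixpoint Q K T0"
  define y0 where "y0 = 1 + (u0 - 1) * T0"
  have "0 \<le> T0 * u0" using perc_fixpoint(1)[of T0] T0 by (simp add: u0_def)
  moreover have "T0 * u0 < T0" using T0 u0 by (simp add: u0_def)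
  ultimately have y0: "0 < y0" "y0 < 1"
    using T0 by (auto simp: y0_def algebra_simps)
  have "T0 * pgf_deriv Q K y0 < 1"
  proof (cases "\<exists>j\<le>K. 2 \<le> j \<and> 0 < Q j")
    case True
    have "pgf Q K y0 = u0"
      using perc_fixpoint(2)[of T0] by (simp add: perc_residual_def u0_def y0_def)
    moreover obtain j where j: "j \<le> K" "2 \<le> j" "0 < Q j" using True by blast
    then have "(1 - y0) * pgf_deriv Q K y0 < pgf Q K 1 - pgf Q K y0"
      by (intro pgf_tangent_below_secant[OF Q_nonneg]) (use y0 in auto)
    ultimately have "(1 - y0) * pgf_deriv Q K y0 < 1 - u0"
      using pgf_one[OF Q_dist] by simp
    then have "(1 - u0) * (T0 * pgf_deriv Q K y0) < 1 - u0"
      by (simp add: y0_def algebra_simps)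
    then show ?thesis using u0 by (simp add: u0_def)
  next
    case False
    have "pgf_deriv Q K y0 \<le> (\<Sum>k\<le>K. Q k)"
      unfolding pgf_deriv_def
    proof (rule sum_mono)
      fix k assume "k \<in> {..K}"
      then have "Q k = 0 \<or> k = 0 \<or> k = 1"
        using False Q_nonneg[of k] by (cases "2 \<le> k") auto
      then show "Q k * (real k * y0 ^ (k - 1)) \<le> Q k"
        using Q_nonneg[of k] by auto
    qed
    then have "pgf_deriv Q K y0 \<le> 1" using Q_dist by (simp add: is_degree_dist_def)
    then have "T0 * pgf_deriv Q K y0 \<le> T0"
      using T0 by (intro mult_left_le) auto
    then show ?thesis using T0 by linarith
  qed
  then show ?thesis by (simp add: u0_def y0_def)
qed

(* Continuity of U at T0, from the least-zero lemma: the residual is uniformly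
   Lipschitz in T and, by transversality, negative just right of U(T0). *)
lemma perc_fixpoint_continuous:
  assumes T0: "0 < T0" "T0 < 1" and u0: "perc_fixpoint Q K T0 < 1"
  shows "isCont (perc_fixpoint Q K) T0"
proof (rule least_zero_continuous[where \<phi> = "perc_residual Q K"])
  show "\<And>T. continuous_on {0..1} (perc_residual Q K T)"
    unfolding perc_residual_def by (intro continuous_intros)
  have near: "\<forall>\<^sub>F T in nhds T0. T \<in> {0..1} \<and> \<bar>T - T0\<bar> < d" if "0 < d" for d
    using that T0
    by (auto simp: eventually_nhds_metric dist_real_def intro!: exI[of _ "min d (min T0 (1 - T0))"])
  show "\<forall>\<^sub>F T in nhds T0. 0 \<le> perc_residual Q K T 0"
    using near[OF zero_less_one]
    by eventually_elim (auto simp: perc_residual_def intro!: pgf_nonneg Q_nonneg)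
  show "\<forall>\<^sub>F T in nhds T0. \<forall>x\<in>{0..1}. \<bar>perc_residual Q K T x - perc_residual Q K T0 x\<bar> < e"
    if e: "0 < e" for e
  proof -
    define C where "C = pgf_deriv Q K 1"
    have C: "0 \<le> C"
      using divided_diff_bounds(1)[of Q 1 1 K] Q_nonneg by (simp add: C_def divided_diff_diag)
    have "\<forall>\<^sub>F T in nhds T0. T \<in> {0..1} \<and> \<bar>T - T0\<bar> < e / (C + 1)"
      using near C e by simp
    then show ?thesis
    proof eventually_elim
      case (elim T)
      show ?case
      proof
        fix x :: real assume x: "x \<in> {0..1}"
        define d where "d = divided_diff Q K (1 + (x - 1) * T) (1 + (x - 1) * T0)"
        have d: "0 \<le> d" "d \<le> C"
          using divided_diff_bounds[OF Q_nonneg unit_interval_shift unit_interval_shift] x elim T0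
          by (auto simp: d_def C_def)
        have "\<bar>perc_residual Q K T x - perc_residual Q K T0 x\<bar> = \<bar>x - 1\<bar> * d * \<bar>T - T0\<bar>"
          using d by (simp add: perc_residual_diff_T d_def abs_mult)
        also have "\<dots> \<le> 1 * (C + 1) * \<bar>T - T0\<bar>"
          using x d by (intro mult_mono) auto
        also have "\<dots> < e"
          using elim C by (simp add: field_simps)
        finally show "\<bar>perc_residual Q K T x - perc_residual Q K T0 x\<bar> < e" .
      qed
    qed
  qed
  let ?u0 = "perc_fixpoint Q K T0"
  show "\<exists>x. ?u0 < x \<and> x < ?u0 + e \<and> x \<le> 1 \<and> perc_residual Q K T0 x < 0" if e: "0 < e" for e
  proof -
    define A where "A = residual_slope Q K T0 ?u0"
    have "A ?u0 < 0"
      using perc_fixpoint_transversal[OF T0 u0] by (simp add: A_def residual_slope_diag)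
    moreover have "isCont A ?u0"
      unfolding A_def residual_slope_def by (intro continuous_intros)
    ultimately have "\<forall>\<^sub>F x in at ?u0. A x < 0"
      by (intro order_tendstoD(2)) (auto simp: continuous_at)
    then have "\<forall>\<^sub>F x in at_right ?u0. A x < 0 \<and> x \<in> {?u0<..<min (?u0 + e) 1}"
      using u0 e by (intro eventually_conj eventually_at_right_real) (auto simp: eventually_at_split)
    then obtain x where x: "A x < 0" "x \<in> {?u0<..<min (?u0 + e) 1}"
      using eventually_happens'[OF trivial_limit_at_right_real] by blast
    have "perc_residual Q K T0 x = A x * (x - ?u0)"
      using perc_residual_diff_x[of Q K T0 x ?u0] perc_fixpoint(2)[of T0] by (simp add: A_def)
    also have "\<dots> < 0"
      using x by (simp add: mult_neg_pos)
    finally show ?thesis using x by auto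
  qed
qed (use perc_fixpoint in auto)

(* U is differentiable at T0 and nonincreasing there:
   U'(T0) = (1 - u0) g_Q'(y0) / (T0 g_Q'(y0) - 1) <= 0. *)
lemma perc_fixpoint_deriv:
  assumes T0: "0 < T0" "T0 < 1" and u0_lt: "perc_fixpoint Q K T0 < 1"
  shows "\<exists>D. (perc_fixpoint Q K has_real_derivative D) (at T0) \<and> D \<le> 0"
proof -
  define U where "U = perc_fixpoint Q K"
  define u0 where "u0 = U T0"
  define A where "A T = residual_slope Q K T u0 (U T)" for T
  define B where "B T = (u0 - 1) * divided_diff Q K (1 + (u0 - 1) * T) (1 + (u0 - 1) * T0)" for T
  have implicit_eq: "A T * (U T - U T0) = - B T * (T - T0)" for T
  proof -
    have "0 = perc_residual Q K T (U T) - perc_residual Q K T0 u0"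
      using perc_fixpoint(2) by (simp add: U_def u0_def)
    also have "\<dots> = (perc_residual Q K T (U T) - perc_residual Q K T u0)
                    + (perc_residual Q K T u0 - perc_residual Q K T0 u0)"
      by simp
    also have "\<dots> = A T * (U T - U T0) + B T * (T - T0)"
      by (simp only: perc_residual_diff_x perc_residual_diff_T A_def B_def u0_def)
    finally show ?thesis by linarith
  qed
  have "isCont U T0"
    using perc_fixpoint_continuous[OF T0 u0_lt] by (simp add: U_def)
  then have cont_A: "isCont A T0"
    unfolding A_def residual_slope_def by (intro continuous_intros)
  have cont_B: "isCont B T0"
    unfolding B_def by (intro continuous_intros)
  have A0: "A T0 < 0"
    using perc_fixpoint_transversal[OF T0 u0_lt] by (simp add: A_def residual_slope_diag U_def u0_def)
  have "u0 \<in> {0..1}" using perc_fixpoint(1) by (simp add: u0_def U_def)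
  then have "0 \<le> divided_diff Q K (1 + (u0 - 1) * T0) (1 + (u0 - 1) * T0)"
    using T0 by (intro divided_diff_bounds(1) Q_nonneg unit_interval_shift) auto
  then have B0: "B T0 \<le> 0"
    using \<open>u0 \<in> {0..1}\<close> by (simp add: B_def mult_nonpos_nonneg)
  have "(U has_real_derivative - B T0 / A T0) (at T0)"
    using cont_A cont_B A0 implicit_eq by (intro implicit_derivative) (auto intro: always_eventually)
  moreover have "- B T0 / A T0 \<le> 0"
    using divide_nonpos_neg[OF B0 A0] by simp
  ultimately show ?thesis by (auto simp: U_def)
qed

lemma perc_outbreak_deriv:
  assumes P_nonneg: "\<And>k. 0 \<le> P k" and P_mean: "0 < pgf_deriv P K 1"
    and T0: "0 < T0" "T0 < 1" and u0_lt: "perc_fixpoint Q K T0 < 1"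
  shows "\<exists>D. ((\<lambda>T. pgf P K (1 + (perc_fixpoint Q K T - 1) * T)) has_real_derivative D) (at T0)
              \<and> D < 0"
proof -
  define u0 where "u0 = perc_fixpoint Q K T0"
  define y0 where "y0 = 1 + (u0 - 1) * T0"
  obtain D where dU: "(perc_fixpoint Q K has_real_derivative D) (at T0)" and D: "D \<le> 0"
    using perc_fixpoint_deriv[OF T0 u0_lt] by blast
  have "0 \<le> T0 * u0" using perc_fixpoint(1)[of T0] T0 by (simp add: u0_def)
  then have "0 < y0" using T0 by (simp add: y0_def algebra_simps)
  then have slope_pos: "0 < pgf_deriv P K y0"
    by (rule pgf_deriv_pos[OF P_nonneg P_mean])
  have "((\<lambda>T. 1 + (perc_fixpoint Q K T - 1) * T) has_real_derivative D * T0 + (u0 - 1)) (at T0)"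
    using dU by (auto intro!: derivative_eq_intros simp: u0_def algebra_simps)
  from DERIV_chain2[OF pgf_has_deriv this]
  have "((\<lambda>T. pgf P K (1 + (perc_fixpoint Q K T - 1) * T))
          has_real_derivative pgf_deriv P K y0 * (D * T0 + (u0 - 1))) (at T0)"
    by (simp add: y0_def u0_def)
  moreover have "D * T0 + (u0 - 1) < 0"
    using mult_nonpos_nonneg[OF D, of T0] T0 u0_lt by (simp add: u0_def)
  then have "pgf_deriv P K y0 * (D * T0 + (u0 - 1)) < 0"
    using slope_pos by (simp add: mult_pos_neg)
  ultimately show ?thesis by blast
qed

end

lemma mean_deg_eq_pgf_deriv: "mean_deg P K = pgf_deriv P K 1"
  by (simp add: mean_deg_def pgf_deriv_def mult.commute)

lemma excess_dist_is_degree_dist: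
  assumes P_dist: "is_degree_dist P K" and mean: "0 < mean_deg P K"
  shows "is_degree_dist (excess_dist P K) K"
proof -
  have P_vanish: "\<forall>k>K. P k = 0" using P_dist by (simp add: is_degree_dist_def)
  have "mean_deg P K = (\<Sum>k\<le>Suc K. real k * P k)"
    using P_vanish by (simp add: mean_deg_def)
  also have "\<dots> = (\<Sum>k\<le>K. real (k + 1) * P (k + 1))"
    by (subst sum.atMost_Suc_shift) simp
  finally have "(\<Sum>k\<le>K. excess_dist P K k) = 1"
    using mean by (simp add: excess_dist_def sum_divide_distrib[symmetric])
  then show ?thesis
    using P_dist P_vanish mean by (auto simp: is_degree_dist_def excess_dist_def)
qed

(* Binomial thinning: the two-type generating function collapses to a
   one-variable one at the effective transmissibility (1 - q) T1 + q T2. *)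
lemma gen_fun_eq_pgf:
  assumes R_vanish: "\<forall>k>K. R k = 0"
  shows "gen_fun R K T1 T2 q u = pgf R K (1 + (u - 1) * ((1 - q) * T1 + q * T2))"
proof -
  define a where "a = 1 + (u - 1) * T1"
  define b where "b = 1 + (u - 1) * T2"
  define F where "F k1 k2 = a ^ k1 * b ^ k2 * split_dist R q k1 k2" for k1 k2
  have "gen_fun R K T1 T2 q u = (\<Sum>(k1, k2)\<in>{..K} \<times> {..K}. F k1 k2)"
    by (simp add: gen_fun_def F_def a_def b_def sum.cartesian_product)
  also have "\<dots> = (\<Sum>(k1, k2)\<in>{(i, j). i + j \<le> K}. F k1 k2)"
    using R_vanish by (intro sum.mono_neutral_right) (auto simp: F_def split_dist_def, meson not_le)
  also have "\<dots> = (\<Sum>n\<le>K. \<Sum>i\<le>n. F i (n - i))"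
    by (rule sum.triangle_reindex_eq)
  also have "\<dots> = (\<Sum>n\<le>K. R n * ((1 - q) * a + q * b) ^ n)"
  proof (rule sum.cong[OF refl])
    fix n
    have "R n * ((1 - q) * a + q * b) ^ n
            = (\<Sum>k\<le>n. R n * (of_nat (n choose k) * ((1 - q) * a) ^ k * (q * b) ^ (n - k)))"
      by (simp add: binomial_ring sum_distrib_left)
    also have "\<dots> = (\<Sum>i\<le>n. F i (n - i))"
      by (rule sum.cong[OF refl])
        (auto simp: F_def split_dist_def binomial_symmetric[symmetric] power_mult_distrib)
    finally show "(\<Sum>i\<le>n. F i (n - i)) = R n * ((1 - q) * a + q * b) ^ n" by simp
  qed
  also have "(1 - q) * a + q * b = 1 + (u - 1) * ((1 - q) * T1 + q * T2)"
    by (simp add: a_def b_def algebra_simps)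
  finally show ?thesis by (simp add: pgf_def)
qed

(* Main result: psi = Psi o T(q), and T(q) decreases in q since T2 < T1. *)
theorem lemma3:
  fixes P :: "nat \<Rightarrow> real" and kmax :: nat and T1 T2 q :: real
  assumes "is_degree_dist P kmax"
    and "mean_deg P kmax > 0"
    and "0 < T2" and "T2 < T1" and "T1 < 1"
    and "q \<in> {0..1}"
    and "0 < psi P kmax T1 T2 q" and "psi P kmax T1 T2 q < 1"
  shows "\<exists>D. ((psi P kmax T1 T2) has_real_derivative D) (at q within {0..1}) \<and> D > 0"
proof -
  define Q where "Q = excess_dist P kmax"
  define Tq where "Tq x = (1 - x) * T1 + x * T2" for x
  define Psi where "Psi T = pgf P kmax (1 + (perc_fixpoint Q kmax T - 1) * T)" for T
  have Q_dist: "is_degree_dist Q kmax"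
    using excess_dist_is_degree_dist[OF assms(1,2)] by (simp add: Q_def)
  have psi_eq: "psi P kmax T1 T2 = (\<lambda>x. Psi (Tq x))"
    using assms(1) Q_dist
    by (auto simp: psi_def G_fun_def u_star_def F_fun_def Psi_def Tq_def perc_fixpoint_def
          least_fixpoint_def gen_fun_eq_pgf is_degree_dist_def Q_def[symmetric])
  have "0 \<le> q * (T1 - T2)" and "q * (T1 - T2) \<le> T1 - T2"
    using assms(4,6) by (auto intro: mult_left_le_one_le)
  then have T0: "0 < Tq q" "Tq q < 1"
    using assms(3-5) by (auto simp: Tq_def algebra_simps)
  have "perc_fixpoint Q kmax (Tq q) \<noteq> 1"
    using assms(8) pgf_one[OF assms(1)] by (auto simp: psi_eq Psi_def)
  then have u0_lt: "perc_fixpoint Q kmax (Tq q) < 1"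
    using perc_fixpoint(1)[OF Q_dist, of "Tq q"] by simp
  have P_nonneg: "\<And>k. 0 \<le> P k" and P_mean: "0 < pgf_deriv P kmax 1"
    using assms(1,2) by (auto simp: is_degree_dist_def mean_deg_eq_pgf_deriv)
  obtain D where dPsi: "(Psi has_real_derivative D) (at (Tq q))" and D: "D < 0"
    using perc_outbreak_deriv[OF Q_dist P_nonneg P_mean T0 u0_lt] unfolding Psi_def by blast
  have "(Tq has_real_derivative T2 - T1) (at q)"
    unfolding Tq_def by (auto intro!: derivative_eq_intros)
  from DERIV_chain2[OF dPsi this]
  have "((\<lambda>x. Psi (Tq x)) has_real_derivative D * (T2 - T1)) (at q within {0..1})"
    by (rule has_field_derivative_at_within)
  moreover have "0 < D * (T2 - T1)"
    using D assms(4) by (simp add: mult_neg_neg)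
  ultimately show ?thesis by (auto simp: psi_eq)
qed

end
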